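(* Let $e\in\mathbb{Z}^+$, $f\in\mathbb{Z}_{\ge0}$, let $F$ be a proper flat in $\mathbb{R}^{\binom{e+2}{2}-1}$, and let $A\subseteq\mathbb{R}^2$ with $|A|=\binom{f+2}{2}$ be such that $A$ is not contained in any element of $\mathcal{C}_{\le f}$. (i) If $e\geq f$, then $|\psi_e(A)\cap F|\le 1+\dim F$. (ii) If $e<f$, then $|\psi_e(A)\cap F|\le\binom{f+2}{2}-\binom{f-e+2}{2}-\binom{e+2}{2}+2+\dim F$. (iii) If $e<f$, then $\dim\psi_d\big(A\setminus\psi_e^{-1}(F)\big)\geq\binom{f-e+2}{2}-1$ for every integer $d\geq f-e$.
   Context: For $k\in\mathbb{Z}^+$, a curve of degree $k$ is the zero set in $\mathbb{R}^2$ of a polynomial in $\mathbb{R}[x,y]$ of degree exactly $k$; $\mathcal{C}_k$ is the family of such curves, $\mathcal{C}_{\le k}:=\bigcup_{j=1}^k\mathcal{C}_j$, and $\mathcal{C}_{\le 0}:=\emptyset$. For $k\in\mathbb{Z}^+$ let $I_k=\{(i,j)\in\mathbb{Z}_{\ge 0}^2: 1\le i+j\le k\}$ (so $|I_k|=\binom{k+2}{2}-1$) and let the $k$-Veronese map be $\psi_k:\mathbb{R}^2\to\mathbb{R}^{\binom{k+2}{2}-1}$, $\psi_k(a_1,a_2)=(a_1^ia_2^j)_{(i,j)\in I_k}$. A flat is an affine subspace (translate of a linear subspace), its dimension being that of the linear subspace. For $S\subseteq\mathbb{R}^N$, $\mathrm{Fl}(S)$ is the smallest flat containing $S$ (the affine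 hull), $\mathrm{Fl}(\emptyset)=\emptyset$, and $\dim S:=\dim\mathrm{Fl}(S)$, with $\dim\emptyset=-1$. *)

theory Defs
  imports Complex_Main "HOL-Library.Function_Algebras"
begin

text \<open>Points of R^{binom(k+2,2)-1} are represented as real-valued functions on
  index pairs (i,j), vanishing outside I_k.\<close>
type_synonym vec = "nat \<times> nat \<Rightarrow> real"

definition Ik :: "nat \<Rightarrow> (nat \<times> nat) set" where
  "Ik k = {(i, j). 1 \<le> i + j \<and> i + j \<le> k}"

definition RN :: "nat \<Rightarrow> vec set" where
  "RN k = {v. \<forall>p. p \<notin> Ik k \<longrightarrow> v p = 0}"

definition veronese :: "nat \<Rightarrow> real \<times> real \<Rightarrow> vec" where
  "veronese k a = (\<lambda>(i, j). if (i, j) \<in> Ik k then fst a ^ i * snd a ^ j else 0)"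

definition scaleF :: "real \<Rightarrow> vec \<Rightarrow> vec" where
  "scaleF c v = (\<lambda>p. c * v p)"

definition is_flat :: "vec set \<Rightarrow> bool" where
  "is_flat F \<longleftrightarrow> (\<exists>a V. module.subspace scaleF V \<and> F = (\<lambda>v. a + v) ` V)"

definition Fl :: "vec set \<Rightarrow> vec set" where
  "Fl S = (if S = {} then {} else \<Inter>{F. is_flat F \<and> S \<subseteq> F})"

definition fdim :: "vec set \<Rightarrow> int" where
  "fdim S = (if S = {} then -1
     else int (vector_space.dim scaleF {x - y | x y. x \<in> Fl S \<and> y \<in> Fl S}))"

definition is_curve :: "nat \<Rightarrow> (real \<times> real) set \<Rightarrow> bool" where
  "is_curve k C \<longleftrightarrow> (\<exists>c :: nat \<times> nat \<Rightarrow> real.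
     (\<forall>i j. c (i, j) \<noteq> 0 \<longrightarrow> i + j \<le> k) \<and> (\<exists>i j. i + j = k \<and> c (i, j) \<noteq> 0) \<and>
     C = {(x, y). (\<Sum>i\<le>k. \<Sum>j\<le>k. c (i, j) * x ^ i * y ^ j) = 0})"

text \<open>C_{\<le>k}; for k = 0 this is empty.\<close>
definition curves_le :: "nat \<Rightarrow> (real \<times> real) set set" where
  "curves_le k = {C. \<exists>j. 1 \<le> j \<and> j \<le> k \<and> is_curve j C}"

end

theory Submission
  imports Defs "HOL-Library.Product_Lexorder" "HOL-Library.Product_Plus"
begin

(* Since A lies on no curve of degree at most f, no nonzero polynomial of degree at most f
   vanishes on A; as |A| = dim P_f, the vectors of monomials of degree at most f evaluated
   at the points of A are linearly independent.  A proper flat F pulls back under psi_e to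
   the zero set of a nonzero polynomial g of degree at most e.  If e < f, no nonzero h of
   degree at most f - e vanishes on A - psi_e^-1(F), for then g h would vanish on A; hence
   the monomial vectors of degree at most f - e at these points span, and binom(f-e+2, 2)
   of them are linearly independent.  Linear independence of the monomial vectors of
   degree at most k makes the psi_d-images affinely independent for every d >= k, which
   gives (i) (with k = f, d = e) and (iii).  For (ii), F is enlarged by points of A outside
   it to a flat of dimension binom(e+2, 2) - 2; this flat is still proper, so at least
   binom(f-e+2, 2) points of A remain outside it. *)

definition fscale :: "real \<Rightarrow> ('a \<Rightarrow> real) \<Rightarrow> 'a \<Rightarrow> real" where
  "fscale c v = (\<lambda>p. c * v p)"

lemma fscale_apply [simp]: "fscale c v p = c * v p"
  by (simp add: fscale_def)

interpretation G: vector_space fscale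
  by unfold_locales (auto simp: fscale_def fun_eq_iff algebra_simps)

lemma scaleF_eq_fscale: "scaleF = fscale"
  by (simp add: scaleF_def fscale_def fun_eq_iff)

lemma sum_fun_apply: "(\<Sum>i\<in>S. f i) x = (\<Sum>i\<in>S. f i x)"
  by (induction S rule: infinite_finite_induct) auto

definition unit_fun :: "'a \<Rightarrow> 'a \<Rightarrow> real" where
  "unit_fun x = (\<lambda>y. if y = x then 1 else 0)"

lemma in_span_unit_funs:
  assumes "finite X" "\<And>y. y \<notin> X \<Longrightarrow> v y = 0"
  shows "v \<in> G.span (unit_fun ` X)"
proof -
  have "v = (\<Sum>x\<in>X. fscale (v x) (unit_fun x))"
    using assms
    by (auto simp: fun_eq_iff sum_fun_apply unit_fun_def if_distrib[of "(*) _"] cong: if_cong)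
  also have "\<dots> \<in> G.span (unit_fun ` X)"
    by (intro G.span_sum G.span_scale G.span_base) auto
  finally show ?thesis .
qed

lemma linear_form_vanishes_on_span:
  assumes "\<forall>b\<in>B. (\<Sum>p\<in>I. c p * b p) = 0" "v \<in> G.span B"
  shows "(\<Sum>p\<in>I. c p * v p) = 0"
  using assms(2)
proof (induction rule: G.span_induct_alt)
  case (step a x y)
  have "(\<Sum>p\<in>I. c p * (fscale a x + y) p) = a * (\<Sum>p\<in>I. c p * x p) + (\<Sum>p\<in>I. c p * y p)"
    by (simp add: algebra_simps sum.distrib sum_distrib_left)
  then show ?case using step assms(1) by simp
qed simp

definition indep_family :: "('t \<Rightarrow> 'a \<Rightarrow> real) \<Rightarrow> 't set \<Rightarrow> bool" where
  "indep_family v T \<longleftrightarrow> (\<forall>l. (\<Sum>t\<in>T. fscale (l t) (v t)) = 0 \<longrightarrow> (\<forall>t\<in>T. l t = 0))"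

lemma inj_on_if_indep_family:
  assumes "finite T" "indep_family v T"
  shows "inj_on v T"
proof (rule inj_onI, rule ccontr)
  fix s t assume st: "s \<in> T" "t \<in> T" "v s = v t" "s \<noteq> t"
  define l where "l u = (if u = s then 1 else if u = t then -1 else 0 :: real)" for u
  have "(\<Sum>u\<in>T. fscale (l u) (v u)) = (\<Sum>u\<in>{s, t}. fscale (l u) (v u))"
    using st assms(1) by (intro sum.mono_neutral_right) (auto simp: l_def fun_eq_iff)
  also have "\<dots> = 0"
    using st by (simp add: l_def fun_eq_iff)
  finally have "l s = 0"
    using assms(2) st(1) unfolding indep_family_def by blast
  then show False by (simp add: l_def)
qed

lemma indep_family_iff_independent:
  assumes "finite T" "inj_on v T"
  shows "indep_family v T \<longleftrightarrow> G.independent (v ` T)"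
proof
  assume indep: "indep_family v T"
  show "G.independent (v ` T)"
  proof (rule G.independent_if_scalars_zero)
    fix l x assume l: "(\<Sum>x\<in>v ` T. fscale (l x) x) = 0" and x: "x \<in> v ` T"
    have "(\<Sum>t\<in>T. fscale (l (v t)) (v t)) = 0"
      using l assms(2) by (simp add: sum.reindex)
    then show "l x = 0"
      using indep[unfolded indep_family_def, rule_format, of "\<lambda>t. l (v t)"] x by blast
  qed (use assms(1) in simp)
next
  assume indep: "G.independent (v ` T)"
  show "indep_family v T" unfolding indep_family_def
  proof (intro allI impI ballI)
    fix l t assume l: "(\<Sum>t\<in>T. fscale (l t) (v t)) = 0" and t: "t \<in> T"
    define l' where "l' x = l (the_inv_into T v x)" for x
    have "(\<Sum>x\<in>v ` T. fscale (l' x) x) = 0"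
      using l assms(2) by (simp add: sum.reindex l'_def the_inv_into_f_f)
    then have "l' (v t) = 0"
      using indep t assms(1) unfolding G.independent_explicit_module by blast
    then show "l t = 0" using assms(2) t by (simp add: l'_def the_inv_into_f_f)
  qed
qed

lemma card_le_dim_if_indep_family:
  assumes "finite T" "indep_family v T" "v ` T \<subseteq> W" "W \<subseteq> G.span Z" "finite Z"
  shows "card T \<le> G.dim W"
proof -
  obtain B where B: "B \<subseteq> W" "G.independent B" "W \<subseteq> G.span B" "card B = G.dim W"
    using G.basis_exists by blast
  have "finite B"
    using G.independent_span_bound[OF assms(5) B(2)] B(1) assms(4) by blast
  moreover have inj: "inj_on v T"
    using inj_on_if_indep_family assms(1,2) .
  moreover have "G.independent (v ` T)"
    using indep_family_iff_independent[OF assms(1) inj] assms(2) by blast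
  ultimately have "card (v ` T) \<le> card B"
    using G.independent_span_bound[of B "v ` T"] assms(3) B(3) by blast
  then show ?thesis using B(4) card_image[OF inj] by simp
qed

lemma nonzero_solution_if_card_less:
  fixes M :: "'d \<Rightarrow> 'x \<Rightarrow> real"
  assumes "finite D" "finite X" "card X < card D"
  shows "\<exists>c. (\<exists>q\<in>D. c q \<noteq> 0) \<and> (\<forall>x\<in>X. (\<Sum>q\<in>D. c q * M q x) = 0)"
proof (rule ccontr)
  assume no_solution: "\<not> ?thesis"
  define r where "r q = (\<lambda>x. if x \<in> X then M q x else 0)" for q
  have "indep_family r D" unfolding indep_family_def
  proof (intro allI impI)
    fix l assume l: "(\<Sum>q\<in>D. fscale (l q) (r q)) = 0"
    have "(\<Sum>q\<in>D. l q * M q x) = 0" if "x \<in> X" for x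
      using fun_cong[OF l, of x] that by (simp add: sum_fun_apply r_def)
    then show "\<forall>q\<in>D. l q = 0" using no_solution by blast
  qed
  moreover have "r ` D \<subseteq> G.span (unit_fun ` X)"
    using in_span_unit_funs[OF assms(2)] by (auto simp: r_def)
  ultimately have "card D \<le> G.dim (G.span (unit_fun ` X))"
    using card_le_dim_if_indep_family[OF assms(1)] assms(2) by blast
  also have "\<dots> \<le> card (unit_fun ` X)"
    using G.dim_le_card[of "G.span (unit_fun ` X)"] assms(2) by simp
  also have "\<dots> \<le> card X"
    using assms(2) by (rule card_image_le)
  finally show False using assms(3) by simp
qed

definition aff_indep :: "('t \<Rightarrow> 'a \<Rightarrow> real) \<Rightarrow> 't set \<Rightarrow> bool" where
  "aff_indep w T \<longleftrightarrow>
     (\<forall>l. (\<Sum>t\<in>T. l t) = 0 \<longrightarrow> (\<Sum>t\<in>T. fscale (l t) (w t)) = 0 \<longrightarrow> (\<forall>t\<in>T. l t = 0))"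

lemma aff_indep_subset:
  assumes "aff_indep w T" "S \<subseteq> T" "finite T"
  shows "aff_indep w S"
  unfolding aff_indep_def
proof (intro allI impI ballI)
  fix l t assume l: "(\<Sum>t\<in>S. l t) = 0" "(\<Sum>t\<in>S. fscale (l t) (w t)) = 0" and "t \<in> S"
  define l' where "l' t = (if t \<in> S then l t else 0)" for t
  have "(\<Sum>t\<in>T. l' t) = 0" "(\<Sum>t\<in>T. fscale (l' t) (w t)) = 0"
    using l assms(2,3) by (simp_all add: l'_def if_distrib[of "\<lambda>c. fscale c _"] sum.If_cases Int_absorb1)
  then have "l' t = 0" using assms(1) \<open>t \<in> S\<close> assms(2) unfolding aff_indep_def by blast
  then show "l t = 0" using \<open>t \<in> S\<close> by (simp add: l'_def)
qed

lemma indep_family_diff_if_aff_indep: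
  assumes "finite T" "aff_indep w T" "t0 \<in> T"
  shows "indep_family (\<lambda>t. w t - w t0) (T - {t0})"
  unfolding indep_family_def
proof (intro allI impI)
  fix l assume l: "(\<Sum>t\<in>T - {t0}. fscale (l t) (w t - w t0)) = 0"
  define l' where "l' t = (if t = t0 then - (\<Sum>t\<in>T - {t0}. l t) else l t)" for t
  have "(\<Sum>t\<in>T. l' t) = 0"
    unfolding sum.remove[OF assms(1,3)] by (simp add: l'_def)
  moreover have "(\<Sum>t\<in>T. fscale (l' t) (w t)) = 0"
  proof -
    have "(\<Sum>t\<in>T. fscale (l' t) (w t)) = (\<Sum>t\<in>T - {t0}. fscale (l t) (w t - w t0))"
      unfolding sum.remove[OF assms(1,3)]
      by (simp add: l'_def fun_eq_iff sum_fun_apply algebra_simps sum_subtractf sum_distrib_left)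
    then show ?thesis using l by simp
  qed
  ultimately have "\<forall>t\<in>T. l' t = 0" using assms(2) unfolding aff_indep_def by blast
  then show "\<forall>t\<in>T - {t0}. l t = 0" unfolding l'_def by (metis DiffE singletonI)
qed

definition Exps :: "nat \<Rightarrow> (nat \<times> nat) set" where
  "Exps k = {(i, j). i + j \<le> k}"

lemma finite_Exps [simp]: "finite (Exps k)"
  by (rule finite_subset[of _ "{..k} \<times> {..k}"]) (auto simp: Exps_def)

lemma Exps_Suc: "Exps (Suc k) = Exps k \<union> (\<lambda>i. (i, Suc k - i)) ` {..Suc k}"
  by (auto simp: Exps_def image_iff)

lemma card_Exps: "card (Exps k) = (k + 2) choose 2"
proof (induction k)
  case 0
  have "Exps 0 = {(0, 0)}" by (auto simp: Exps_def)
  then show ?case by (simp add: choose_two)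
next
  case (Suc k)
  have "Exps k \<inter> (\<lambda>i. (i, Suc k - i)) ` {..Suc k} = {}" by (auto simp: Exps_def)
  moreover have "inj_on (\<lambda>i. (i, Suc k - i)) {..Suc k}" by (auto intro: inj_onI)
  ultimately have "card (Exps (Suc k)) = card (Exps k) + (k + 2)"
    unfolding Exps_Suc by (simp add: card_Un_disjoint card_image)
  then show ?case using Suc by (simp add: choose_two)
qed

lemma Exps_eq_insert_Ik: "Exps k = insert (0, 0) (Ik k)"
  by (auto simp: Exps_def Ik_def)

lemma zero_notin_Ik: "(0, 0) \<notin> Ik k"
  by (simp add: Ik_def)

lemma finite_Ik [simp]: "finite (Ik k)"
  using finite_Exps[of k] by (simp add: Exps_eq_insert_Ik)

lemma card_Ik: "card (Ik k) + 1 = card (Exps k)"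
  by (simp add: Exps_eq_insert_Ik zero_notin_Ik)

definition monom :: "real \<times> real \<Rightarrow> nat \<times> nat \<Rightarrow> real" where
  "monom x q = fst x ^ fst q * snd x ^ snd q"

lemma monom_add: "monom x (p + q) = monom x p * monom x q"
  by (simp add: monom_def power_add)

definition peval :: "nat \<Rightarrow> (nat \<times> nat \<Rightarrow> real) \<Rightarrow> real \<times> real \<Rightarrow> real" where
  "peval k c x = (\<Sum>q\<in>Exps k. c q * monom x q)"

definition annihilated :: "nat \<Rightarrow> (real \<times> real) set \<Rightarrow> bool" where
  "annihilated k X \<longleftrightarrow> (\<exists>c. (\<exists>q\<in>Exps k. c q \<noteq> 0) \<and> (\<forall>x\<in>X. peval k c x = 0))"

lemma annihilated_subset: "annihilated k Y \<Longrightarrow> X \<subseteq> Y \<Longrightarrow> annihilated k X"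
  unfolding annihilated_def by blast

lemma annihilated_if_card_less:
  assumes "finite X" "card X < card (Exps k)"
  shows "annihilated k X"
  using nonzero_solution_if_card_less[OF finite_Exps assms(1,2), of "\<lambda>q x. monom x q"]
  unfolding annihilated_def peval_def by blast

definition poly_mult ::
    "nat \<Rightarrow> nat \<Rightarrow> (nat \<times> nat \<Rightarrow> real) \<Rightarrow> (nat \<times> nat \<Rightarrow> real) \<Rightarrow> nat \<times> nat \<Rightarrow> real"
  where "poly_mult k l g h s = (\<Sum>(p, q)\<in>{(p, q) \<in> Exps k \<times> Exps l. p + q = s}. g p * h q)"

lemma add_mem_Exps: "p \<in> Exps k \<Longrightarrow> q \<in> Exps l \<Longrightarrow> p + q \<in> Exps (k + l)"
  by (auto simp: Exps_def)

lemma peval_poly_mult: "peval (k + l) (poly_mult k l g h) x = peval k g x * peval l h x"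
proof -
  have "peval k g x * peval l h x = (\<Sum>(p, q)\<in>Exps k \<times> Exps l. g p * h q * monom x (p + q))"
    unfolding peval_def sum_product sum.cartesian_product by (simp add: monom_add mult_ac)
  also have "\<dots> = (\<Sum>s\<in>Exps (k + l). \<Sum>(p, q)\<in>{(p, q) \<in> Exps k \<times> Exps l. p + q = s}. g p * h q * monom x s)"
    by (subst sum.group[of "Exps k \<times> Exps l" "Exps (k + l)" "\<lambda>(p, q). p + q", symmetric])
      (auto simp: split_def intro!: sum.cong, auto simp: Exps_def)
  also have "\<dots> = peval (k + l) (poly_mult k l g h) x"
    unfolding peval_def poly_mult_def sum_distrib_right case_prod_unfold ..
  finally show ?thesis ..
qed

lemma lex_add_eq_imp_eq:
  fixes p q p' q' :: "nat \<times> nat"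
  assumes "p \<le> p'" "q \<le> q'" "p + q = p' + q'"
  shows "p = p'" "q = q'"
  using assms by (auto simp: less_eq_prod_def prod_eq_iff)

(* The lexicographically largest exponents of g and h give the only nonzero term at their sum. *)
lemma poly_mult_nonzero:
  assumes "\<exists>p\<in>Exps k. g p \<noteq> 0" "\<exists>q\<in>Exps l. h q \<noteq> 0"
  shows "\<exists>s\<in>Exps (k + l). poly_mult k l g h s \<noteq> 0"
proof -
  define P where "P = {p \<in> Exps k. g p \<noteq> 0}"
  define Q where "Q = {q \<in> Exps l. h q \<noteq> 0}"
  define s where "s = Max P + Max Q"
  have "finite P" "P \<noteq> {}" "finite Q" "Q \<noteq> {}"
    using assms by (auto simp: P_def Q_def)
  then have MP: "Max P \<in> P" and MQ: "Max Q \<in> Q" by simp_all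
  have leading: "(p, q) = (Max P, Max Q)"
    if "(p, q) \<in> {(p, q) \<in> Exps k \<times> Exps l. p + q = s}" "g p * h q \<noteq> 0" for p q
  proof -
    have "p \<in> P" "q \<in> Q" using that by (auto simp: P_def Q_def)
    then have "p \<le> Max P" "q \<le> Max Q" using \<open>finite P\<close> \<open>finite Q\<close> by simp_all
    with that(1) show ?thesis using lex_add_eq_imp_eq[of p "Max P" q "Max Q"] by (simp add: s_def)
  qed
  have "poly_mult k l g h s = (\<Sum>(p, q)\<in>{(Max P, Max Q)}. g p * h q)"
    unfolding poly_mult_def using MP MQ leading
    by (intro sum.mono_neutral_right) (auto simp: P_def Q_def s_def intro: finite_subset[of _ "Exps k \<times> Exps l"])
  also have "\<dots> \<noteq> 0" using MP MQ by (simp add: P_def Q_def)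
  finally have "poly_mult k l g h s \<noteq> 0" .
  moreover have "s \<in> Exps (k + l)" using MP MQ by (simp add: s_def P_def Q_def add_mem_Exps)
  ultimately show ?thesis by blast
qed

lemma annihilated_Un:
  assumes "annihilated k X" "annihilated l Y"
  shows "annihilated (k + l) (X \<union> Y)"
proof -
  obtain g where "\<exists>p\<in>Exps k. g p \<noteq> 0" "\<forall>x\<in>X. peval k g x = 0"
    using assms(1) unfolding annihilated_def by blast
  moreover obtain h where "\<exists>q\<in>Exps l. h q \<noteq> 0" "\<forall>y\<in>Y. peval l h y = 0"
    using assms(2) unfolding annihilated_def by blast
  ultimately show ?thesis unfolding annihilated_def
    by (intro exI[of _ "poly_mult k l g h"]) (auto simp: poly_mult_nonzero peval_poly_mult)
qed

lemma not_annihilated_diff: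
  assumes "\<not> annihilated (e + k) A" "annihilated e Z"
  shows "\<not> annihilated k (A - Z)"
  using annihilated_Un[OF assms(2), of k "A - Z"] annihilated_subset[of "e + k" _ A] assms(1)
  by blast

lemma peval_eq_double_sum:
  assumes "\<And>q. c q \<noteq> 0 \<Longrightarrow> q \<in> Exps k"
  shows "peval k c (x, y) = (\<Sum>i\<le>k. \<Sum>j\<le>k. c (i, j) * x ^ i * y ^ j)"
proof -
  have "(\<Sum>i\<le>k. \<Sum>j\<le>k. c (i, j) * x ^ i * y ^ j) = (\<Sum>q\<in>{..k} \<times> {..k}. c q * monom (x, y) q)"
    by (simp add: sum.cartesian_product monom_def mult.assoc case_prod_beta)
  also have "\<dots> = peval k c (x, y)"
    unfolding peval_def using assms
    by (intro sum.mono_neutral_right) (auto simp: Exps_def)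
  finally show ?thesis ..
qed

lemma peval_exact_degree:
  assumes "\<exists>q\<in>Exps k. c q \<noteq> 0"
  obtains j c' q where "j \<le> k" "\<And>x. peval k c x = peval j c' x"
    "\<And>p. c' p \<noteq> 0 \<Longrightarrow> p \<in> Exps j" "c' q \<noteq> 0" "fst q + snd q = j"
proof -
  define c' where "c' p = (if p \<in> Exps k then c p else 0)" for p
  define J where "J = {p. c' p \<noteq> 0}"
  define j where "j = Max ((\<lambda>p. fst p + snd p) ` J)"
  have "J \<subseteq> Exps k" "J \<noteq> {}" using assms by (auto simp: J_def c'_def split: if_splits)
  then have "finite J" using finite_Exps finite_subset by metis
  then have "j \<in> (\<lambda>p. fst p + snd p) ` J" unfolding j_def using \<open>J \<noteq> {}\<close> by simp
  then obtain q where q: "c' q \<noteq> 0" "fst q + snd q = j" unfolding J_def by blast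
  have supp: "p \<in> Exps j" if "c' p \<noteq> 0" for p
  proof -
    have "fst p + snd p \<le> j"
      unfolding j_def using that \<open>finite J\<close> by (intro Max_ge) (auto simp: J_def)
    then show ?thesis by (cases p) (simp add: Exps_def)
  qed
  have "j \<le> k" using q supp \<open>J \<subseteq> Exps k\<close> unfolding J_def Exps_def by auto
  have "peval k c x = peval j c' x" for x
  proof -
    have "peval k c x = peval k c' x" unfolding peval_def c'_def by simp
    also have "\<dots> = peval j c' x"
      unfolding peval_def using supp \<open>j \<le> k\<close>
      by (intro sum.mono_neutral_right finite_Exps) (auto simp: Exps_def)
    finally show ?thesis .
  qed
  with that \<open>j \<le> k\<close> supp q show thesis by blast
qed

lemma on_curve_if_annihilated:
  assumes "X \<noteq> {}" "annihilated k X"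
  shows "\<exists>C\<in>curves_le k. X \<subseteq> C"
proof -
  obtain c where c: "\<exists>q\<in>Exps k. c q \<noteq> 0" "\<forall>x\<in>X. peval k c x = 0"
    using assms(2) unfolding annihilated_def by blast
  obtain j c' q where deg: "j \<le> k" "\<And>x. peval k c x = peval j c' x"
    and supp: "\<And>p. c' p \<noteq> 0 \<Longrightarrow> p \<in> Exps j" and q: "c' q \<noteq> 0" "fst q + snd q = j"
    using peval_exact_degree[OF c(1)] by metis
  have "j \<noteq> 0"
  proof
    assume "j = 0"
    then have "Exps j = {(0, 0)}" "q = (0, 0)" using q supp by (auto simp: Exps_def)
    moreover obtain x where "x \<in> X" using assms(1) by blast
    ultimately show False using c(2) q(1) deg(2)[of x] by (simp add: peval_def monom_def)
  qed
  have "is_curve j {x. peval j c' x = 0}"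
    unfolding is_curve_def
  proof (intro exI[of _ c'] conjI)
    show "\<forall>i l. c' (i, l) \<noteq> 0 \<longrightarrow> i + l \<le> j" using supp by (auto simp: Exps_def)
    show "\<exists>i l. i + l = j \<and> c' (i, l) \<noteq> 0" using q by (intro exI[of _ "fst q"] exI[of _ "snd q"]) simp
    show "{x. peval j c' x = 0} = {(x, y). (\<Sum>i\<le>j. \<Sum>l\<le>j. c' (i, l) * x ^ i * y ^ l) = 0}"
      using peval_eq_double_sum[of c' j] supp by auto
  qed
  then have "{x. peval j c' x = 0} \<in> curves_le k"
    using \<open>j \<noteq> 0\<close> deg(1) unfolding curves_le_def by (auto intro: exI[of _ j])
  moreover have "X \<subseteq> {x. peval j c' x = 0}" using c(2) deg(2) by auto
  ultimately show ?thesis by blast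
qed

lemma veronese_apply: "q \<in> Ik k \<Longrightarrow> veronese k x q = monom x q"
  by (cases q) (simp add: veronese_def monom_def)

lemma veronese_in_RN: "veronese k x \<in> RN k"
  by (auto simp: RN_def veronese_def)

lemma inj_veronese:
  assumes "1 \<le> k"
  shows "inj (veronese k)"
proof (rule injI)
  fix x y assume eq: "veronese k x = veronese k y"
  have "(1, 0) \<in> Ik k" "(0, 1) \<in> Ik k" using assms by (auto simp: Ik_def)
  then show "x = y"
    using fun_cong[OF eq, of "(1, 0)"] fun_cong[OF eq, of "(0, 1)"]
    by (simp add: veronese_apply monom_def prod_eq_iff)
qed

lemma card_veronese_image_Int:
  assumes "1 \<le> e"
  shows "card (veronese e ` A \<inter> F) = card (A \<inter> veronese e -` F)"
proof -
  have "veronese e ` A \<inter> F = veronese e ` (A \<inter> veronese e -` F)" by blast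
  then show ?thesis
    using inj_veronese[OF assms] by (simp add: card_image inj_on_subset[of _ UNIV])
qed

lemma peval_eq_veronese: "peval k c x = c (0, 0) + (\<Sum>q\<in>Ik k. c q * veronese k x q)"
  by (simp add: peval_def Exps_eq_insert_Ik zero_notin_Ik veronese_apply monom_def)

(* The annihilating polynomial is a nonzero linear form on RN e vanishing on B, composed with
   veronese e and shifted by its value at a. *)
lemma annihilated_veronese_vimage:
  assumes "finite B" "card B < card (Ik e)"
  shows "annihilated e (veronese e -` ((+) a ` G.span B))"
proof -
  obtain c where c: "\<exists>q\<in>Ik e. c q \<noteq> 0" "\<forall>b\<in>B. (\<Sum>q\<in>Ik e. c q * b q) = 0"
    using nonzero_solution_if_card_less[OF finite_Ik assms, of "\<lambda>q b. b q"] by blast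
  define L where "L v = (\<Sum>q\<in>Ik e. c q * v q)" for v :: vec
  define g where "g q = (if q = (0, 0) then - L a else c q)" for q
  have g_Ik: "g q = c q" if "q \<in> Ik e" for q
    using that zero_notin_Ik by (auto simp: g_def)
  have "\<exists>q\<in>Exps e. g q \<noteq> 0"
    using c(1) g_Ik unfolding Exps_eq_insert_Ik by auto
  moreover have "peval e g x = 0" if x: "veronese e x \<in> (+) a ` G.span B" for x
  proof -
    obtain v where v: "v \<in> G.span B" "veronese e x = a + v" using x by blast
    have "peval e g x = - L a + L (veronese e x)"
      unfolding peval_eq_veronese using g_Ik by (simp add: g_def L_def)
    also have "\<dots> = L v"
      by (simp add: v(2) L_def algebra_simps sum.distrib)
    also have "\<dots> = 0"
      unfolding L_def using linear_form_vanishes_on_span[OF c(2) v(1)] .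
    finally show ?thesis .
  qed
  ultimately show ?thesis unfolding annihilated_def by blast
qed

definition monomial_vector :: "nat \<Rightarrow> real \<times> real \<Rightarrow> nat \<times> nat \<Rightarrow> real" where
  "monomial_vector k x = (\<lambda>q. if q \<in> Exps k then monom x q else 0)"

lemma indep_monomial_vectors_if_not_annihilated:
  assumes "finite X" "\<not> annihilated k X"
  obtains T where "T \<subseteq> X" "card (Exps k) \<le> card T" "indep_family (monomial_vector k) T"
proof -
  obtain B where B: "B \<subseteq> monomial_vector k ` X" "G.independent B" "monomial_vector k ` X \<subseteq> G.span B"
    using G.maximal_independent_subset by blast
  have "finite B" using B(1) assms(1) finite_surj by blast
  have "card (Exps k) \<le> card B"
  proof (rule ccontr)
    assume "\<not> card (Exps k) \<le> card B"
    then obtain c where c: "\<exists>q\<in>Exps k. c q \<noteq> 0" "\<forall>b\<in>B. (\<Sum>q\<in>Exps k. c q * b q) = 0"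
      using nonzero_solution_if_card_less[OF finite_Exps \<open>finite B\<close>, of k "\<lambda>q b. b q"] by auto
    have "peval k c x = 0" if "x \<in> X" for x
    proof -
      have "monomial_vector k x \<in> G.span B" using B(3) that by blast
      from linear_form_vanishes_on_span[OF c(2) this] show ?thesis
        by (simp add: peval_def monomial_vector_def)
    qed
    then show False using assms(2) c(1) unfolding annihilated_def by blast
  qed
  define T where "T = inv_into X (monomial_vector k) ` B"
  have "T \<subseteq> X" unfolding T_def using B(1) inv_into_into[of _ "monomial_vector k" X] by blast
  moreover have image_T: "monomial_vector k ` T = B"
    unfolding T_def using image_inv_into_cancel[OF refl B(1)] .
  moreover have card_T: "card T = card B"
    unfolding T_def using B(1) by (intro card_image inj_on_inv_into)
  moreover have "inj_on (monomial_vector k) T"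
    using image_T card_T \<open>finite B\<close> by (intro eq_card_imp_inj_on) (auto simp: T_def)
  ultimately show ?thesis
    using that \<open>card (Exps k) \<le> card B\<close> B(2) \<open>finite B\<close>
    by (metis T_def finite_imageI indep_family_iff_independent)
qed

(* The coordinate (0, 0) of monomial_vector k t is the constant 1 and the others are coordinates
   of veronese d t, so an affine dependence of the Veronese points is a linear dependence of
   the monomial vectors. *)
lemma aff_indep_veronese_if_indep_monomial_vectors:
  assumes "k \<le> d" "indep_family (monomial_vector k) T"
  shows "aff_indep (veronese d) T"
  unfolding aff_indep_def
proof (intro allI impI)
  fix l assume l: "(\<Sum>t\<in>T. l t) = 0" "(\<Sum>t\<in>T. fscale (l t) (veronese d t)) = 0"
  have "(\<Sum>t\<in>T. fscale (l t) (monomial_vector k t)) q = 0" for q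
  proof (cases "q = (0, 0)")
    case True
    then show ?thesis using l(1) by (simp add: sum_fun_apply monomial_vector_def Exps_def monom_def)
  next
    case False
    have "q \<in> Exps k \<Longrightarrow> q \<in> Ik d" using False assms(1) by (auto simp: Exps_def Ik_def)
    then show ?thesis
      using fun_cong[OF l(2), of q]
      by (cases "q \<in> Exps k") (auto simp: sum_fun_apply monomial_vector_def veronese_apply)
  qed
  then show "\<forall>t\<in>T. l t = 0" using assms(2) unfolding indep_family_def by (simp add: fun_eq_iff)
qed

lemma RN_subspace: "G.subspace (RN k)"
  unfolding G.subspace_def RN_def by auto

lemma RN_subset_span: "RN k \<subseteq> G.span (unit_fun ` Ik k)"
  using in_span_unit_funs[OF finite_Ik] by (auto simp: RN_def)

lemma is_flat_translate: "G.subspace V \<Longrightarrow> is_flat ((+) a ` V)"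
  unfolding is_flat_def scaleF_eq_fscale by blast

lemma is_flat_RN: "is_flat (RN k)"
  using is_flat_translate[OF RN_subspace, of 0 k] by simp

lemma flat_nonempty: "is_flat F \<Longrightarrow> F \<noteq> {}"
  unfolding is_flat_def scaleF_eq_fscale using G.subspace_0 by blast

lemma Fl_flat: "is_flat F \<Longrightarrow> Fl F = F"
  unfolding Fl_def using flat_nonempty by auto

lemma Fl_subset_RN:
  assumes "S \<noteq> {}" "S \<subseteq> RN k"
  shows "S \<subseteq> Fl S" "Fl S \<subseteq> RN k"
  using assms is_flat_RN[of k] unfolding Fl_def by auto

lemma fdim_eq_dim_diffs: "S \<noteq> {} \<Longrightarrow> fdim S = int (G.dim {x - y |x y. x \<in> Fl S \<and> y \<in> Fl S})"
  by (simp add: fdim_def scaleF_eq_fscale)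

lemma diffs_translate_subspace:
  assumes "G.subspace V"
  shows "{x - y |x y. x \<in> (+) a ` V \<and> y \<in> (+) a ` V} = V"
proof (intro set_eqI iffI)
  fix z assume "z \<in> {x - y |x y. x \<in> (+) a ` V \<and> y \<in> (+) a ` V}"
  then obtain u v where "u \<in> V" "v \<in> V" "z = (a + u) - (a + v)" by blast
  then show "z \<in> V" using G.subspace_diff[OF assms] by simp
next
  fix z assume "z \<in> V"
  then have "z = (a + z) - (a + 0)" "a + z \<in> (+) a ` V" "a + 0 \<in> (+) a ` V"
    using G.subspace_0[OF assms] by auto
  then show "z \<in> {x - y |x y. x \<in> (+) a ` V \<and> y \<in> (+) a ` V}" by blast
qed

lemma fdim_translate_span:
  assumes "G.independent B"
  shows "fdim ((+) a ` G.span B) = card B"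
proof -
  have flat: "is_flat ((+) a ` G.span B)" by (rule is_flat_translate[OF G.subspace_span])
  show ?thesis
    unfolding fdim_eq_dim_diffs[OF flat_nonempty[OF flat]] Fl_flat[OF flat]
      diffs_translate_subspace[OF G.subspace_span]
    by (simp add: G.dim_eq_card_independent[OF assms])
qed

lemma card_le_fdim_if_aff_indep:
  assumes "finite T" "aff_indep w T" "w ` T \<subseteq> S" "S \<subseteq> RN d"
  shows "int (card T) \<le> fdim S + 1"
proof (cases "T = {}")
  case True
  then show ?thesis by (simp add: fdim_def)
next
  case False
  then obtain t0 where "t0 \<in> T" by blast
  then have "S \<noteq> {}" using assms(3) by blast
  define D where "D = {x - y |x y. x \<in> Fl S \<and> y \<in> Fl S}"
  have "S \<subseteq> Fl S" "Fl S \<subseteq> RN d" using Fl_subset_RN[OF \<open>S \<noteq> {}\<close> assms(4)] by blast+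
  have "w t - w t0 \<in> D" if "t \<in> T" for t
    using that \<open>t0 \<in> T\<close> assms(3) \<open>S \<subseteq> Fl S\<close> unfolding D_def by blast
  then have image_D: "(\<lambda>t. w t - w t0) ` (T - {t0}) \<subseteq> D" by blast
  have "D \<subseteq> RN d"
  proof
    fix z assume "z \<in> D"
    then obtain x y where "x \<in> Fl S" "y \<in> Fl S" "z = x - y" unfolding D_def by blast
    then show "z \<in> RN d" using \<open>Fl S \<subseteq> RN d\<close> G.subspace_diff[OF RN_subspace] by blast
  qed
  then have "D \<subseteq> G.span (unit_fun ` Ik d)" using RN_subset_span[of d] by (rule order_trans)
  then have "card (T - {t0}) \<le> G.dim D"
    using card_le_dim_if_indep_family[OF _ indep_family_diff_if_aff_indep[OF assms(1,2) \<open>t0 \<in> T\<close>]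
        image_D] assms(1) by simp
  then show ?thesis
    using fdim_eq_dim_diffs[OF \<open>S \<noteq> {}\<close>] \<open>t0 \<in> T\<close> assms(1) by (simp add: D_def)
qed

lemma proper_flat_decomp:
  assumes "is_flat F" "F \<subseteq> RN e" "F \<noteq> RN e"
  obtains a B where "F = (+) a ` G.span B" "finite B" "card B < card (Ik e)" "fdim F = card B"
proof -
  obtain a V where V: "G.subspace V" "F = (+) a ` V"
    using assms(1) unfolding is_flat_def scaleF_eq_fscale by blast
  have "a \<in> RN e" using V assms(2) G.subspace_0[OF V(1)] by force
  have in_V_iff: "x \<in> V \<longleftrightarrow> a + x \<in> F" for x
    using V(2) by auto
  have "V \<subseteq> RN e"
  proof
    fix v assume "v \<in> V"
    then have "a + v \<in> RN e" using in_V_iff assms(2) by blast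
    from G.subspace_diff[OF RN_subspace this \<open>a \<in> RN e\<close>] show "v \<in> RN e" by simp
  qed
  obtain B where B: "B \<subseteq> V" "G.independent B" "V \<subseteq> G.span B"
    using G.maximal_independent_subset[of V] by blast
  have span_B: "G.span B = V" using G.span_minimal[OF B(1) V(1)] B(3) by blast
  obtain w where w: "w \<in> RN e" "w \<notin> V"
  proof (rule ccontr)
    assume "\<not> thesis"
    then have "RN e \<subseteq> V" using that by blast
    have "RN e \<subseteq> F"
    proof
      fix x assume "x \<in> RN e"
      then have "x - a \<in> V" using G.subspace_diff[OF RN_subspace _ \<open>a \<in> RN e\<close>] \<open>RN e \<subseteq> V\<close> by blast
      then show "x \<in> F" using in_V_iff by simp
    qed
    then show False using assms(2,3) by blast
  qed
  have indep: "G.independent (insert w B)"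
    using G.independent_insertI[OF _ B(2)] w(2) span_B by blast
  have sub: "insert w B \<subseteq> G.span (unit_fun ` Ik e)"
    using w(1) B(1) \<open>V \<subseteq> RN e\<close> RN_subset_span[of e] by blast
  have "finite (insert w B) \<and> card (insert w B) \<le> card (unit_fun ` Ik e)"
    using G.independent_span_bound[OF _ indep sub] by simp
  moreover have "w \<notin> B" using w(2) B(1) by blast
  ultimately have "finite B" "card B < card (Ik e)"
    using card_image_le[OF finite_Ik, of unit_fun e] by auto
  moreover have "fdim F = card B" using V(2) span_B fdim_translate_span[OF B(2)] by simp
  ultimately show ?thesis using that V(2) span_B by blast
qed

lemma card_veronese_Int_flat_le:
  assumes "f \<le> e" "1 \<le> e" "F \<subseteq> RN e" "finite A" "card A = card (Exps f)" "\<not> annihilated f A"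
  shows "int (card (veronese e ` A \<inter> F)) \<le> fdim F + 1"
proof -
  obtain T where T: "T \<subseteq> A" "card (Exps f) \<le> card T" "indep_family (monomial_vector f) T"
    using indep_monomial_vectors_if_not_annihilated[OF assms(4,6)] .
  have "T = A" using card_seteq[OF assms(4) T(1)] T(2) assms(5) by simp
  then have "aff_indep (veronese e) (A \<inter> veronese e -` F)"
    using aff_indep_veronese_if_indep_monomial_vectors[OF assms(1) T(3)] aff_indep_subset assms(4)
    by blast
  then have "int (card (A \<inter> veronese e -` F)) \<le> fdim F + 1"
    using card_le_fdim_if_aff_indep[OF _ _ _ assms(3)] assms(4) by blast
  then show ?thesis using card_veronese_image_Int[OF assms(2)] by simp
qed

lemma card_Exps_le_outside_flat_diff:
  assumes "e \<le> f" "\<not> annihilated f A" "finite A" "finite B" "T \<subseteq> A" "finite T"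
    and "card B + card T < card (Ik e)"
  shows "card (Exps (f - e)) \<le> card (A - veronese e -` ((+) a ` G.span B) - T)"
proof -
  \<comment> \<open>the flat through a spanned by B and veronese e ` T - a is still proper\<close>
  define B' where "B' = B \<union> (\<lambda>t. veronese e t - a) ` T"
  have "card B' \<le> card B + card T"
    unfolding B'_def using card_Un_le[of B] card_image_le[OF assms(6)] by (meson add_left_mono le_trans)
  then have "annihilated e (veronese e -` ((+) a ` G.span B'))"
    using annihilated_veronese_vimage assms(4,6,7) by (simp add: B'_def)
  then have "\<not> annihilated (f - e) (A - veronese e -` ((+) a ` G.span B'))"
    using not_annihilated_diff[of e "f - e"] assms(1,2) by simp
  then have "card (Exps (f - e)) \<le> card (A - veronese e -` ((+) a ` G.span B'))"
    using annihilated_if_card_less assms(3) by (meson finite_Diff not_less)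
  also have "\<dots> \<le> card (A - veronese e -` ((+) a ` G.span B) - T)"
  proof (rule card_mono)
    show "finite (A - veronese e -` ((+) a ` G.span B) - T)" using assms(3) by simp
    have "G.span B \<subseteq> G.span B'" unfolding B'_def by (rule G.span_mono) blast
    moreover have "veronese e t \<in> (+) a ` G.span B'" if "t \<in> T" for t
      using that G.span_base[of "veronese e t - a" B'] by (force simp: B'_def)
    ultimately show "A - veronese e -` ((+) a ` G.span B') \<subseteq> A - veronese e -` ((+) a ` G.span B) - T"
      by blast
  qed
  finally show ?thesis .
qed

lemma card_veronese_Int_proper_flat_le:
  assumes "e \<le> f" "1 \<le> e" "is_flat F" "F \<subseteq> RN e" "F \<noteq> RN e" "finite A" "\<not> annihilated f A"
  shows "int (card (veronese e ` A \<inter> F)) + int (card (Exps (f - e))) + int (card (Ik e))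
    \<le> int (card A) + fdim F + 1"
proof -
  obtain a B where B: "F = (+) a ` G.span B" "finite B" "card B < card (Ik e)" "fdim F = card B"
    using proper_flat_decomp[OF assms(3-5)] .
  define A' where "A' = A - veronese e -` F"
  \<comment> \<open>r further directions would turn F into a hyperplane of RN e\<close>
  define r where "r = card (Ik e) - 1 - card B"
  obtain T where T: "T \<subseteq> A'" "card T = min r (card A')" "finite T"
    using obtain_subset_with_card_n[of "min r (card A')" A'] by auto
  have "T \<subseteq> A" using T(1) unfolding A'_def by blast
  moreover have "card B + card T < card (Ik e)" using T(2) B(3) unfolding r_def by linarith
  ultimately have "card (Exps (f - e)) \<le> card (A' - T)"
    using card_Exps_le_outside_flat_diff[OF assms(1,7,6) B(2) _ T(3)] unfolding A'_def B(1) by blast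
  moreover have "card (A' - T) = card A' - card T"
    using T(1,3) by (simp add: card_Diff_subset)
  moreover have "0 < card (Exps (f - e))"
    by (simp add: card_Exps)
  ultimately have "card T = r" using T(2) by linarith
  moreover have "card A = card (veronese e ` A \<inter> F) + card A'"
    unfolding A'_def card_veronese_image_Int[OF assms(2)] using card_Int_Diff[OF assms(6)] .
  ultimately have "card (veronese e ` A \<inter> F) + card (Exps (f - e)) + card (Ik e) \<le> card A + card B + 1"
    using \<open>card (Exps (f - e)) \<le> card (A' - T)\<close> \<open>card (A' - T) = card A' - card T\<close> T(2) B(3)
    unfolding r_def by linarith
  then show ?thesis using B(4) by linarith
qed

lemma fdim_veronese_outside_proper_flat_ge:
  assumes "e \<le> f" "f - e \<le> d" "is_flat F" "F \<subseteq> RN e" "F \<noteq> RN e" "finite A" "\<not> annihilated f A"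
  shows "int (card (Exps (f - e))) \<le> fdim (veronese d ` (A - veronese e -` F)) + 1"
proof -
  obtain a B where "F = (+) a ` G.span B" "finite B" "card B < card (Ik e)"
    using proper_flat_decomp[OF assms(3-5)] by metis
  then have "annihilated e (veronese e -` F)"
    using annihilated_veronese_vimage by simp
  then have "\<not> annihilated (f - e) (A - veronese e -` F)"
    using not_annihilated_diff[of e "f - e"] assms(1,7) by simp
  then obtain T where T: "T \<subseteq> A - veronese e -` F" "card (Exps (f - e)) \<le> card T"
      "indep_family (monomial_vector (f - e)) T"
    using indep_monomial_vectors_if_not_annihilated assms(6) by (metis finite_Diff)
  have "finite T" using T(1) assms(6) finite_subset by blast
  moreover have "aff_indep (veronese d) T"
    using aff_indep_veronese_if_indep_monomial_vectors[OF assms(2) T(3)] .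
  moreover have "veronese d ` T \<subseteq> veronese d ` (A - veronese e -` F)"
    using T(1) by (rule image_mono)
  moreover have "veronese d ` (A - veronese e -` F) \<subseteq> RN d"
    using veronese_in_RN by blast
  ultimately have "int (card T) \<le> fdim (veronese d ` (A - veronese e -` F)) + 1"
    by (rule card_le_fdim_if_aff_indep)
  then show ?thesis using T(2) by linarith
qed

theorem lemma15:
  fixes e f :: nat and F :: "vec set" and A :: "(real \<times> real) set"
  assumes "e \<ge> 1"
    and "is_flat F" and "F \<subseteq> RN e" and "F \<noteq> RN e"
    and "finite A" and "card A = (f + 2) choose 2"
    and "\<not> (\<exists>C\<in>curves_le f. A \<subseteq> C)"
  shows "(e \<ge> f \<longrightarrow> int (card (veronese e ` A \<inter> F)) \<le> 1 + fdim F)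
    \<and> (e < f \<longrightarrow> int (card (veronese e ` A \<inter> F))
          \<le> int ((f + 2) choose 2) - int ((f - e + 2) choose 2) - int ((e + 2) choose 2) + 2 + fdim F)
    \<and> (e < f \<longrightarrow> (\<forall>d::nat. d \<ge> f - e \<longrightarrow>
          fdim (veronese d ` (A - {a. veronese e a \<in> F})) \<ge> int ((f - e + 2) choose 2) - 1))"
proof -
  have card_A: "card A = card (Exps f)" using assms(6) by (simp add: card_Exps)
  then have "A \<noteq> {}" by (auto simp: card_Exps)
  then have not_annihilated: "\<not> annihilated f A"
    using on_curve_if_annihilated assms(7) by blast
  have card_Ik_e: "int (card (Ik e)) = int ((e + 2) choose 2) - 1"
    using card_Ik[of e] by (simp add: card_Exps)
  show ?thesis
  proof (intro conjI impI allI)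
    assume "f \<le> e"
    then show "int (card (veronese e ` A \<inter> F)) \<le> 1 + fdim F"
      using card_veronese_Int_flat_le[OF _ assms(1,3,5) card_A not_annihilated] by simp
  next
    assume "e < f"
    then show "int (card (veronese e ` A \<inter> F))
        \<le> int ((f + 2) choose 2) - int ((f - e + 2) choose 2) - int ((e + 2) choose 2) + 2 + fdim F"
      using card_veronese_Int_proper_flat_le[OF _ assms(1-5) not_annihilated] assms(6) card_Ik_e
      by (simp add: card_Exps)
  next
    fix d assume "e < f" "f - e \<le> d"
    show "fdim (veronese d ` (A - {a. veronese e a \<in> F})) \<ge> int ((f - e + 2) choose 2) - 1"
      using fdim_veronese_outside_proper_flat_ge[OF _ \<open>f - e \<le> d\<close> assms(2-5) not_annihilated] \<open>e < f\<close>
      by (simp add: vimage_def card_Exps)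
  qed
qed

end
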